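(* For every integer $n \ge 19$ and every $d \in \{3,4,5\}$, \[ \mathcal{F}_{P_{n-d}} \le \frac{101}{100}\cdot \frac{\mathcal{F}_{P_n}}{\psi^d}. \]
   Context: $\mathcal{F}_{P_m}$ is the number of minimal forts of the path on $m$ vertices; equivalently $\mathcal{F}_{P_m}=a_m$ where $a_1=a_2=a_3=1$ and $a_m = a_{m-2}+a_{m-3}$ for $m \ge 4$. (A fort is a nonempty vertex set such that every vertex outside it has zero or at least two neighbors in it; minimal means no proper subset is a fort.) $\psi \approx 1.32472$ is the real root of $z^3 - z - 1 = 0$. *)

theory Defs
  imports Complex_Main
begin

text \<open>Number of minimal forts of the path on m vertices, via the recurrence
  a_1 = a_2 = a_3 = 1, a_m = a_(m-2) + a_(m-3) for m >= 4 (a_0 = 0 by convention,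
  never used in the statement).\<close>
fun pathForts :: "nat \<Rightarrow> nat" where
  "pathForts 0 = 0"
| "pathForts (Suc 0) = 1"
| "pathForts (Suc (Suc 0)) = 1"
| "pathForts (Suc (Suc (Suc 0))) = 1"
| "pathForts (Suc (Suc (Suc (Suc m)))) = pathForts (Suc (Suc m)) + pathForts (Suc m)"

definition psi :: real where
  "psi = (THE z::real. z ^ 3 - z - 1 = 0)"

end

theory Submission
  imports Defs
begin

text \<open>Both sides of the inequality satisfy the Padovan recurrence a(n) = a(n-2) + a(n-3)
  in \<open>n\<close>, hence so does their difference; since the recurrence has nonnegative coefficients,
  nonnegativity of the difference propagates from the three initial indices \<open>n = 19, 20, 21\<close>.
  These nine cases are checked numerically with the bound \<open>\<psi> \<le> 1.3248\<close>, which holds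
  because \<open>z\<^sup>3 - z\<close> is increasing for \<open>z \<ge> 1\<close> and exceeds \<open>1\<close> at \<open>1.3248\<close>.\<close>

lemma pathForts_rec: "n \<ge> 4 \<Longrightarrow> pathForts n = pathForts (n - 2) + pathForts (n - 3)"
  by (cases n rule: pathForts.cases) auto

lemma pathForts_14_to_21:
  "pathForts 14 = 28" "pathForts 15 = 37" "pathForts 16 = 49" "pathForts 17 = 65"
  "pathForts 18 = 86" "pathForts 19 = 114" "pathForts 20 = 151" "pathForts 21 = 200"
  by (simp_all add: numeral_eq_Suc)

lemma nonneg_by_padovan_recurrence:
  fixes b :: "nat \<Rightarrow> 'a::ordered_comm_monoid_add"
  assumes rec: "\<And>n. n \<ge> N + 3 \<Longrightarrow> b n = b (n - 2) + b (n - 3)"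
    and "0 \<le> b N" "0 \<le> b (N + 1)" "0 \<le> b (N + 2)"
  shows "n \<ge> N \<Longrightarrow> 0 \<le> b n"
proof (induction n rule: less_induct)
  case (less n)
  show ?case
  proof (cases "n \<ge> N + 3")
    case True
    then have "0 \<le> b (n - 2)" "0 \<le> b (n - 3)" by (simp_all add: less.IH)
    then show ?thesis by (simp add: rec[OF True])
  next
    case False
    with less.prems consider "n = N" | "n = N + 1" | "n = N + 2" by linarith
    then show ?thesis by cases (use assms in auto)
  qed
qed

lemma cubic_root_gt_1:
  fixes z :: real
  assumes root: "z ^ 3 - z - 1 = 0"
  shows "1 < z"
proof (rule ccontr)
  assume "\<not> 1 < z"
  have cube: "z ^ 3 = z * z\<^sup>2" by (simp add: power3_eq_cube power2_eq_square)
  show False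
  proof (cases "0 \<le> z")
    case True
    with \<open>\<not> 1 < z\<close> have "z\<^sup>2 \<le> 1" by (simp add: power_le_one)
    then have "z ^ 3 \<le> z" unfolding cube using True by (simp add: mult_left_le)
    with root show False by simp
  next
    case False
    then have "z ^ 3 < 0" by (simp add: odd_power_less_zero)
    with root have "z < -1" by linarith
    then have "1 < (- z)\<^sup>2" by (intro one_less_power) auto
    then have "1 < z\<^sup>2" by simp
    then have "z ^ 3 < z" unfolding cube using False by (simp add: mult_less_cancel_left1)
    with root show False by simp
  qed
qed

lemma cube_minus_strict_mono:
  fixes x y :: real
  assumes "1 \<le> x" "x < y"
  shows "x ^ 3 - x < y ^ 3 - y"
proof -
  have "1 \<le> x\<^sup>2" "0 < x * y" "0 < y\<^sup>2" using assms by (simp_all add: one_le_power)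
  then have "0 < x\<^sup>2 + x * y + y\<^sup>2 - 1" by linarith
  with assms have "0 < (y - x) * (x\<^sup>2 + x * y + y\<^sup>2 - 1)" by simp
  also have "\<dots> = (y ^ 3 - y) - (x ^ 3 - x)"
    by (simp add: algebra_simps power2_eq_square power3_eq_cube)
  finally show ?thesis by simp
qed

lemma cubic_root_unique:
  fixes x y :: real
  assumes "x ^ 3 - x - 1 = 0" "y ^ 3 - y - 1 = 0"
  shows "x = y"
proof -
  have "1 < x" "1 < y" using assms by (simp_all add: cubic_root_gt_1)
  show ?thesis
  proof (cases x y rule: linorder_cases)
    case less
    with \<open>1 < x\<close> have "x ^ 3 - x < y ^ 3 - y" by (intro cube_minus_strict_mono) auto
    with assms show ?thesis by simp
  next
    case greater
    with \<open>1 < y\<close> have "y ^ 3 - y < x ^ 3 - x" by (intro cube_minus_strict_mono) auto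
    with assms show ?thesis by simp
  qed
qed

lemma psi_root: "psi ^ 3 - psi - 1 = 0"
proof -
  have "\<exists>z\<ge>1. z \<le> 2 \<and> z ^ 3 - z - 1 = (0::real)"
    by (rule IVT[where f = "\<lambda>z. z ^ 3 - z - 1"]) (auto intro!: continuous_intros)
  then obtain z :: real where z: "z ^ 3 - z - 1 = 0" by blast
  show ?thesis
    unfolding psi_def
    by (rule theI[where P = "\<lambda>z. z ^ 3 - z - 1 = 0", OF z cubic_root_unique[OF _ z]])
qed

lemma psi_gt_1: "1 < psi"
  using cubic_root_gt_1[OF psi_root] .

lemma psi_le: "psi \<le> 3312 / 2500"
proof (rule ccontr)
  assume "\<not> psi \<le> 3312 / 2500"
  then have "(3312 / 2500) ^ 3 - 3312 / 2500 < psi ^ 3 - (psi :: real)"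
    by (intro cube_minus_strict_mono) auto
  with psi_root show False by (simp add: power_divide)
qed

lemma pathForts_base_cases:
  assumes "d \<in> {3, 4, 5}" "k \<in> {19, 20, 21}"
  shows "psi ^ d * pathForts (k - d) \<le> 101 / 100 * pathForts k"
proof -
  have "psi ^ d * pathForts (k - d) \<le> (3312 / 2500) ^ d * pathForts (k - d)"
    using psi_gt_1 psi_le by (intro mult_right_mono power_mono) auto
  also have "\<dots> \<le> 101 / 100 * pathForts k"
    using assms by (auto simp: pathForts_14_to_21 power_divide)
  finally show ?thesis .
qed

theorem mainTheorem15:
  fixes n d :: nat
  assumes "n \<ge> 19" and "d \<in> {3, 4, 5}"
  shows "real (pathForts (n - d)) \<le> (101 / 100) * (real (pathForts n) / psi ^ d)"
proof -
  define b where "b k = 101 / 100 * real (pathForts k) - psi ^ d * real (pathForts (k - d))" for k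
  have "b k = b (k - 2) + b (k - 3)" if "19 + 3 \<le> k" for k
  proof -
    have "pathForts k = pathForts (k - 2) + pathForts (k - 3)"
      "pathForts (k - d) = pathForts (k - 2 - d) + pathForts (k - 3 - d)"
      using that assms(2) pathForts_rec[of k] pathForts_rec[of "k - d"] by (auto simp: diff_commute)
    then show ?thesis unfolding b_def by (simp add: algebra_simps)
  qed
  moreover have "0 \<le> b k" if "k \<in> {19, 20, 21}" for k
    using pathForts_base_cases[OF assms(2) that] by (simp add: b_def)
  ultimately have "0 \<le> b n"
    using nonneg_by_padovan_recurrence[of 19 b n] assms(1) by simp
  with psi_gt_1 show ?thesis by (simp add: b_def field_simps)
qed

end
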